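(* Let the operator matrix $T^\circ$ (as in the context) be essentially self-adjoint, with $T^\circ_{11}$ bounded below and $T^\circ_{22}$ bounded above, and suppose at least one of the following holds: (1) $T^\circ_{22}$ is essentially self-adjoint and for some $\gamma,\varkappa\in\mathbb R$, $\|T^\circ_{21}y\|^2_{\mathfrak H_2}\le\gamma\langle(T^\circ_{11}-\varkappa)y,y\rangle_{\mathfrak H_1}$ for all $y\in\operatorname{dom}T^\circ_{11}$; (2) for some $\gamma,\varkappa,\tau\in\mathbb R$, $\|T^\circ_{21}y\|^2_{\mathfrak H_2}\le\gamma\langle(T^\circ_{11}-\varkappa)y,y\rangle_{\mathfrak H_1}$ for all $y\in\operatorname{dom}T^\circ_{11}$ and $\|T^\circ_{12}y\|^2_{\mathfrak H_1}\le\gamma\langle(\tau-T^\circ_{22})y,y\rangle_{\mathfrak H_2}$ for all $y\in\operatorname{dom}T^\circ_{22}$; (3) $T^\circ_{11}$ and $T^\circ_{22}$ are bounded. Then the closure of $T^\circ$ is its angular extension.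
   Context: Let $\mathfrak H=\mathfrak H_1\oplus\mathfrak H_2$ be an orthogonal sum of Hilbert spaces. Let $T^\circ_{11}\colon\operatorname{dom}T^\circ_{11}\subseteq\mathfrak H_1\to\mathfrak H_1$, $T^\circ_{12}\colon\operatorname{dom}T^\circ_{22}\to\mathfrak H_1$, $T^\circ_{21}\colon\operatorname{dom}T^\circ_{11}\to\mathfrak H_2$, $T^\circ_{22}\colon\operatorname{dom}T^\circ_{22}\subseteq\mathfrak H_2\to\mathfrak H_2$ be linear operators such that $T^\circ=\begin{pmatrix}T^\circ_{11}&T^\circ_{12}\\ T^\circ_{21}&T^\circ_{22}\end{pmatrix}$ with domain $\operatorname{dom}T^\circ_{11}\oplus\operatorname{dom}T^\circ_{22}$ is symmetric, $T^\circ_{11}$ symmetric, $T^\circ_{22}$ symmetric. Angular extension: fix $\varkappa',\tau'\in\mathbb R$ with $\langle(T^\circ_{11}-\varkappa')y,y\rangle_{\mathfrak H_1}\ge\|y\|^2_{\mathfrak H_1}$ on $\operatorname{dom}T^\circ_{11}$ and $\langle(\tau'-T^\circ_{22})y,y\rangle_{\mathfrak H_2}\ge\|y\|^2_{\mathfrak H_2}$ on $\operatorname{dom}T^\circ_{22}$. Let $\mathfrak D_2$ be the completion of $\operatorname{dom}T^\circ_{22}$ in the norm $\langle(\tau'-T^\circ_{22})y,y\rangle^{1/2}_{\mathfrak H_2}$, $T^\bullet_{22}$ the Friedrichs extension of $T^\circ_{22}$ associated with $\mathfrak D_2$, and $\mathfrak D_1$ the completion of $\operatorname{dom}T^\circ_{11}$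 in the norm $\bigl[\langle(T^\circ_{11}-\varkappa')y,y\rangle_{\mathfrak H_1}+\langle(\tau'-T^\bullet_{22})^{-1}T^\circ_{21}y,T^\circ_{21}y\rangle_{\mathfrak H_2}\bigr]^{1/2}$. Let $I_j\colon\mathfrak D_j\to\mathfrak H_j$ be the natural embeddings, $\mathfrak D=\mathfrak D_1\oplus\mathfrak D_2$, $I=I_1\oplus I_2$, $\mathfrak D^*$ the space of bounded antilinear functionals on $\mathfrak D$, $I^*\colon\mathfrak H\to\mathfrak D^*$, $\langle I^*h,y\rangle=\langle h,Iy\rangle_{\mathfrak H}$. The closure of $I^*T^\circ I$ is an everywhere defined bounded operator $T\colon\mathfrak D\to\mathfrak D^*$, and the angular extension of $T^\circ$ is $T^\bullet=(I^* )^{-1}TI^{-1}$, with domain $\{Iy:y\in\mathfrak D,\ Ty\in I^*(\mathfrak H)\}$ and $T^\bullet(Iy)=h$ where $I^*h=Ty$. *)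

theory Defs
  imports "HOL-Analysis.Analysis"
begin

text \<open>Complex Hilbert spaces are modelled as real Hilbert spaces
  (real part of the complex inner product) with an orthogonal complex structure J
  (multiplication by i).\<close>

definition complex_structure :: "('a::real_inner \<Rightarrow> 'a) \<Rightarrow> bool" where
  "complex_structure J \<longleftrightarrow> linear J \<and> (\<forall>x. J (J x) = - x) \<and> (\<forall>x y. inner (J x) (J y) = inner x y)"

definition complex_subspace :: "('a::real_vector \<Rightarrow> 'a) \<Rightarrow> 'a set \<Rightarrow> bool" where
  "complex_subspace J D \<longleftrightarrow> subspace D \<and> (\<forall>x\<in>D. J x \<in> D)"

definition complex_linear_on ::
  "('a::real_vector \<Rightarrow> 'a) \<Rightarrow> ('b::real_vector \<Rightarrow> 'b) \<Rightarrow> 'a set \<Rightarrow> ('a \<Rightarrow> 'b) \<Rightarrow> bool" where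
  "complex_linear_on Ja Jb D T \<longleftrightarrow>
     (\<forall>x\<in>D. \<forall>y\<in>D. T (x + y) = T x + T y) \<and> (\<forall>c. \<forall>x\<in>D. T (c *\<^sub>R x) = c *\<^sub>R T x)
     \<and> (\<forall>x\<in>D. T (Ja x) = Jb (T x))"

definition op_graph :: "'a set \<Rightarrow> ('a \<Rightarrow> 'b) \<Rightarrow> ('a \<times> 'b) set" where
  "op_graph D T = {(x, T x) | x. x \<in> D}"

definition adjoint_graph :: "'a::real_inner set \<Rightarrow> ('a \<Rightarrow> 'b::real_inner) \<Rightarrow> ('b \<times> 'a) set" where
  "adjoint_graph D T = {(u, v). \<forall>x\<in>D. inner (T x) u = inner x v}"

definition symmetric_op :: "'a::real_inner set \<Rightarrow> ('a \<Rightarrow> 'a) \<Rightarrow> bool" where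
  "symmetric_op D T \<longleftrightarrow> closure D = UNIV \<and> (\<forall>x\<in>D. \<forall>y\<in>D. inner (T x) y = inner x (T y))"

text \<open>Essentially self-adjoint: densely defined and the closure equals the adjoint
  (i.e. the closure is self-adjoint, since the adjoint of the closure is the adjoint).\<close>
definition ess_selfadjoint :: "'a::real_inner set \<Rightarrow> ('a \<Rightarrow> 'a) \<Rightarrow> bool" where
  "ess_selfadjoint D T \<longleftrightarrow> closure D = UNIV \<and> closure (op_graph D T) = adjoint_graph D T"

definition bounded_below_op :: "'a::real_inner set \<Rightarrow> ('a \<Rightarrow> 'a) \<Rightarrow> bool" where
  "bounded_below_op D T \<longleftrightarrow> (\<exists>c. \<forall>y\<in>D. c * inner y y \<le> inner (T y) y)"

definition bounded_above_op :: "'a::real_inner set \<Rightarrow> ('a \<Rightarrow> 'a) \<Rightarrow> bool" where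
  "bounded_above_op D T \<longleftrightarrow> (\<exists>c. \<forall>y\<in>D. inner (T y) y \<le> c * inner y y)"

definition bounded_op :: "'a::real_normed_vector set \<Rightarrow> ('a \<Rightarrow> 'b::real_normed_vector) \<Rightarrow> bool" where
  "bounded_op D T \<longleftrightarrow> (\<exists>C. \<forall>y\<in>D. norm (T y) \<le> C * norm y)"

definition block_op ::
  "('a::plus \<Rightarrow> 'a) \<Rightarrow> ('b::plus \<Rightarrow> 'a) \<Rightarrow> ('a \<Rightarrow> 'b) \<Rightarrow> ('b \<Rightarrow> 'b) \<Rightarrow> 'a \<times> 'b \<Rightarrow> 'a \<times> 'b" where
  "block_op T11 T12 T21 T22 p = (T11 (fst p) + T12 (snd p), T21 (fst p) + T22 (snd p))"

text \<open>Sequences in D that are Cauchy for the norm sqrt(q); they represent the elements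
  of the completion of D with respect to this norm.\<close>
definition form_cauchy :: "('a::real_vector \<Rightarrow> real) \<Rightarrow> 'a set \<Rightarrow> (nat \<Rightarrow> 'a) \<Rightarrow> bool" where
  "form_cauchy q D x \<longleftrightarrow> (\<forall>n. x n \<in> D) \<and> (\<forall>e>0. \<exists>N. \<forall>m\<ge>N. \<forall>n\<ge>N. q (x m - x n) < e)"

text \<open>Image of the completion under the natural embedding into the ambient space.\<close>
definition form_completion_image :: "('a::real_normed_vector \<Rightarrow> real) \<Rightarrow> 'a set \<Rightarrow> 'a set" where
  "form_completion_image q D = {w. \<exists>x. form_cauchy q D x \<and> x \<longlonglongrightarrow> w}"

text \<open>Friedrichs extension of the upper semibounded T (with tau - T \<ge> 1) associated with the
  completion D2: restriction of the adjoint to the form domain.\<close>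
definition friedrichs_graph :: "'b::real_inner set \<Rightarrow> ('b \<Rightarrow> 'b) \<Rightarrow> real \<Rightarrow> ('b \<times> 'b) set" where
  "friedrichs_graph D T \<tau> =
     {(w, v). (w, v) \<in> adjoint_graph D T \<and>
              w \<in> form_completion_image (\<lambda>y. \<tau> * inner y y - inner (T y) y) D}"

definition friedrichs_resolvent :: "'b::real_inner set \<Rightarrow> ('b \<Rightarrow> 'b) \<Rightarrow> real \<Rightarrow> 'b \<Rightarrow> 'b" where
  "friedrichs_resolvent D T \<tau> f = (THE u. \<exists>v. (u, v) \<in> friedrichs_graph D T \<tau> \<and> \<tau> *\<^sub>R u - v = f)"

definition ang_form1 ::
  "('a::real_inner \<Rightarrow> 'a) \<Rightarrow> ('a \<Rightarrow> 'b::real_inner) \<Rightarrow> 'b set \<Rightarrow> ('b \<Rightarrow> 'b) \<Rightarrow> real \<Rightarrow> real \<Rightarrow> 'a \<Rightarrow> real" where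
  "ang_form1 T11 T21 dom22 T22 \<kappa> \<tau> y =
     inner (T11 y) y - \<kappa> * inner y y + inner (friedrichs_resolvent dom22 T22 \<tau> (T21 y)) (T21 y)"

definition ang_form2 :: "('b::real_inner \<Rightarrow> 'b) \<Rightarrow> real \<Rightarrow> 'b \<Rightarrow> real" where
  "ang_form2 T22 \<tau> y = \<tau> * inner y y - inner (T22 y) y"

text \<open>Graph of the angular extension T^\<bullet> = (I^*)^(-1) T I^(-1):
  pairs (I y, h) with y in D = D1 \<oplus> D2 (represented by a D-Cauchy sequence x in
  dom11 \<times> dom22 with H-limit I y) such that T y = I^* h, i.e. for every z in D
  (represented by a D-Cauchy sequence with H-limit w = I z), the value (T y)(z),
  which is the limit of (I^* T I x_n)(z) = <T x_n, w>, equals <h, w>.\<close>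
definition angular_ext ::
  "('a::real_inner \<Rightarrow> 'a) \<Rightarrow> ('b::real_inner \<Rightarrow> 'a) \<Rightarrow> ('a \<Rightarrow> 'b) \<Rightarrow> ('b \<Rightarrow> 'b) \<Rightarrow> 'a set \<Rightarrow> 'b set
    \<Rightarrow> real \<Rightarrow> real \<Rightarrow> (('a \<times> 'b) \<times> ('a \<times> 'b)) set" where
  "angular_ext T11 T12 T21 T22 dom11 dom22 \<kappa> \<tau> =
     (let q = (\<lambda>p. ang_form1 T11 T21 dom22 T22 \<kappa> \<tau> (fst p) + ang_form2 T22 \<tau> (snd p));
          Dm = dom11 \<times> dom22;
          Tc = block_op T11 T12 T21 T22
      in {(u, h). \<exists>x. form_cauchy q Dm x \<and> x \<longlonglongrightarrow> u \<and>
                   (\<forall>z w. form_cauchy q Dm z \<and> z \<longlonglongrightarrow> w \<longrightarrow>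
                          (\<lambda>n. inner (Tc (x n)) w) \<longlonglongrightarrow> inner h w)})"

end

theory Submission
  imports Defs
begin

text \<open>The angular extension is the operator induced by \<open>T\<^sup>\<circ>\<close> on the completion of its domain
  in the energy norm \<open>q\<close>. Everything rests on the bound of \<open>q\<close> by the graph norm of \<open>T\<^sup>\<circ>\<close>:
  testing \<open>T\<^sup>\<circ>d\<close> against \<open>(d\<^sub>1, -d\<^sub>2)\<close> controls the two diagonal forms, while the Friedrichs
  resolvent term is at most \<open>2\<parallel>T\<^sub>2\<^sub>1d\<^sub>1\<parallel>\<^sup>2\<close>, which is bounded either by the form bound on \<open>T\<^sub>2\<^sub>1\<close>
  or, for bounded \<open>T\<^sub>2\<^sub>2\<close>, by \<open>\<parallel>T\<^sup>\<circ>d\<parallel> + \<parallel>T\<^sub>2\<^sub>2d\<^sub>2\<parallel>\<close>. Hence graph limits are energy limits, which puts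
  the closure inside the angular extension. Conversely, testing the angular extension against
  the domain of \<open>T\<^sup>\<circ>\<close> shows it lies in the adjoint, and the adjoint is the closure by essential
  self-adjointness. The Friedrichs resolvent \<open>(\<tau> - T\<^sub>2\<^sub>2)\<^sup>-\<^sup>1f\<close> is constructed by the Dirichlet
  principle, as the minimizer of \<open>q(y) - 2\<langle>y, f\<rangle>\<close> over the energy completion.\<close>

lemma linear_coeff_zero_if_quadratic_nonneg:
  fixes c Q :: real
  assumes nonneg: "\<And>t. 0 \<le> 2 * t * c + t\<^sup>2 * Q"
  shows "c = 0"
proof (rule ccontr)
  assume "c \<noteq> 0"
  define t where "t = - c / (\<bar>Q\<bar> + 1)"
  have "0 \<le> 2 * t * c + t\<^sup>2 * Q" by (rule nonneg)
  also have "\<dots> \<le> 2 * t * c + t\<^sup>2 * (\<bar>Q\<bar> + 1)"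
    by (intro add_left_mono mult_left_mono) auto
  also have "\<dots> = t * (2 * c + t * (\<bar>Q\<bar> + 1))"
    by (simp add: power2_eq_square algebra_simps)
  also have "\<dots> = t * c"
    unfolding t_def by simp
  also have "\<dots> = - c\<^sup>2 / (\<bar>Q\<bar> + 1)"
    unfolding t_def by (simp add: power2_eq_square)
  finally show False using \<open>c \<noteq> 0\<close> by (simp add: field_simps)
qed

locale upper_semibounded_op =
  fixes D :: "'b::{real_inner,complete_space} set" and T :: "'b \<Rightarrow> 'b" and \<tau> :: real
  assumes subspace: "subspace D"
    and additive: "x \<in> D \<Longrightarrow> y \<in> D \<Longrightarrow> T (x + y) = T x + T y"
    and scaleR: "x \<in> D \<Longrightarrow> T (c *\<^sub>R x) = c *\<^sub>R T x"
    and symmetric: "x \<in> D \<Longrightarrow> y \<in> D \<Longrightarrow> inner (T x) y = inner x (T y)"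
    and inner_le_form: "y \<in> D \<Longrightarrow> inner y y \<le> ang_form2 T \<tau> y"
begin

abbreviation form :: "'b \<Rightarrow> real" where "form \<equiv> ang_form2 T \<tau>"

definition polar :: "'b \<Rightarrow> 'b \<Rightarrow> real" where "polar y z = \<tau> * inner y z - inner (T y) z"

definition energy :: "'b \<Rightarrow> 'b \<Rightarrow> real" where "energy f y = form y - 2 * inner y f"

lemma diff_in_D: "x \<in> D \<Longrightarrow> y \<in> D \<Longrightarrow> x - y \<in> D"
  using subspace by (rule subspace_diff)

lemma form_lin_comb:
  assumes "a \<in> D" "c \<in> D"
  shows "form (s *\<^sub>R a + t *\<^sub>R c) = s\<^sup>2 * form a + 2 * s * t * polar a c + t\<^sup>2 * form c"
proof -
  have "s *\<^sub>R a \<in> D" "t *\<^sub>R c \<in> D" using assms subspace by (auto simp: subspace_def)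
  then have "T (s *\<^sub>R a + t *\<^sub>R c) = s *\<^sub>R T a + t *\<^sub>R T c"
    using additive scaleR assms by simp
  moreover have "inner (T c) a = inner (T a) c"
    using symmetric[OF assms(2,1)] by (simp add: inner_commute)
  ultimately show ?thesis
    by (simp add: ang_form2_def polar_def power2_eq_square algebra_simps inner_commute)
qed

lemma form_diff: "a \<in> D \<Longrightarrow> c \<in> D \<Longrightarrow> form (a - c) = form a - 2 * polar a c + form c"
  using form_lin_comb[of a c 1 "-1"] by simp

lemma form_nonneg: "y \<in> D \<Longrightarrow> 0 \<le> form y"
  using inner_le_form[of y] by (meson inner_ge_zero order_trans)

lemma polar_le: "a \<in> D \<Longrightarrow> c \<in> D \<Longrightarrow> 2 * polar a c \<le> form a + form c"
  using form_diff form_nonneg diff_in_D by fastforce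

lemma form_diff_le: "a \<in> D \<Longrightarrow> c \<in> D \<Longrightarrow> form (a - c) \<le> 2 * form a + 2 * form c"
  using form_lin_comb[of a c 1 1] form_diff form_nonneg[of "a + c"] subspace_add[OF subspace]
  by fastforce

lemma polar_tendsto: "x \<longlonglongrightarrow> u \<Longrightarrow> (\<lambda>n. polar a (x n)) \<longlonglongrightarrow> polar a u"
  unfolding polar_def by (intro tendsto_intros)

lemma friedrichs_graph_iff:
  "(w, v) \<in> friedrichs_graph D T \<tau> \<longleftrightarrow>
     (w, v) \<in> adjoint_graph D T \<and> w \<in> form_completion_image form D"
  by (simp add: friedrichs_graph_def ang_form2_def[abs_def])

lemma form_completion_image_diff:
  assumes "u1 \<in> form_completion_image form D" "u2 \<in> form_completion_image form D"
  shows "u1 - u2 \<in> form_completion_image form D"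
proof -
  obtain x1 where x1: "form_cauchy form D x1" "x1 \<longlonglongrightarrow> u1"
    using assms(1) by (auto simp: form_completion_image_def)
  obtain x2 where x2: "form_cauchy form D x2" "x2 \<longlonglongrightarrow> u2"
    using assms(2) by (auto simp: form_completion_image_def)
  have "form_cauchy form D (\<lambda>n. x1 n - x2 n)"
    unfolding form_cauchy_def
  proof (intro conjI allI impI)
    show "x1 n - x2 n \<in> D" for n using x1(1) x2(1) diff_in_D by (simp add: form_cauchy_def)
  next
    fix e :: real assume "e > 0"
    then obtain N1 N2 where
      N1: "\<forall>m\<ge>N1. \<forall>n\<ge>N1. form (x1 m - x1 n) < e/4" and
      N2: "\<forall>m\<ge>N2. \<forall>n\<ge>N2. form (x2 m - x2 n) < e/4"
      using x1(1) x2(1) unfolding form_cauchy_def by (meson divide_pos_pos zero_less_numeral)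
    show "\<exists>N. \<forall>m\<ge>N. \<forall>n\<ge>N. form (x1 m - x2 m - (x1 n - x2 n)) < e"
    proof (intro exI allI impI)
      fix m n assume "max N1 N2 \<le> m" "max N1 N2 \<le> n"
      then have "form (x1 m - x1 n) < e/4" "form (x2 m - x2 n) < e/4" using N1 N2 by auto
      moreover have "form ((x1 m - x1 n) - (x2 m - x2 n)) \<le> 2 * form (x1 m - x1 n) + 2 * form (x2 m - x2 n)"
        using x1(1) x2(1) by (intro form_diff_le diff_in_D) (auto simp: form_cauchy_def)
      ultimately show "form (x1 m - x2 m - (x1 n - x2 n)) < e" by (simp add: algebra_simps)
    qed
  qed
  moreover have "(\<lambda>n. x1 n - x2 n) \<longlonglongrightarrow> u1 - u2" using x1 x2 by (intro tendsto_intros)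
  ultimately show ?thesis by (auto simp: form_completion_image_def)
qed

lemma form_le_polar_eventually:
  assumes fc: "form_cauchy form D x" and lim: "x \<longlonglongrightarrow> u" and e: "e > 0"
  shows "\<exists>N. \<forall>n\<ge>N. form (x n) \<le> e + 2 * polar (x n) u"
proof -
  have xD: "x n \<in> D" for n using fc by (simp add: form_cauchy_def)
  obtain N where N: "\<forall>m\<ge>N. \<forall>n\<ge>N. form (x m - x n) < e" using fc e by (auto simp: form_cauchy_def)
  have "form (x n) \<le> e + 2 * polar (x n) u" if n: "n \<ge> N" for n
  proof (rule LIMSEQ_le_const)
    show "(\<lambda>m. e + 2 * polar (x n) (x m)) \<longlonglongrightarrow> e + 2 * polar (x n) u"
      by (intro tendsto_intros polar_tendsto lim)
    have "form (x n) \<le> e + 2 * polar (x n) (x m)" if "m \<ge> N" for m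
    proof -
      have "polar (x n) (x n - x m) = form (x n) - polar (x n) (x m)"
        by (simp add: polar_def ang_form2_def algebra_simps)
      then show ?thesis
        using polar_le[OF xD diff_in_D[OF xD xD], of n n m] N n that by fastforce
    qed
    then show "\<exists>M. \<forall>m\<ge>M. form (x n) \<le> e + 2 * polar (x n) (x m)" by blast
  qed
  then show ?thesis by blast
qed

lemma friedrichs_solution_norm_le:
  assumes "(u, v) \<in> friedrichs_graph D T \<tau>" "\<tau> *\<^sub>R u - v = f"
  shows "inner u u \<le> 2 * inner u f"
proof -
  obtain x where fc: "form_cauchy form D x" and lim: "x \<longlonglongrightarrow> u"
    using assms(1) by (auto simp: friedrichs_graph_iff form_completion_image_def)
  have xD: "x n \<in> D" for n using fc by (simp add: form_cauchy_def)
  have polar_u: "polar y u = inner y f" if "y \<in> D" for y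
    using assms that
    by (auto simp: friedrichs_graph_iff adjoint_graph_def polar_def inner_diff_right)
  have "inner u u - 2 * inner u f \<le> e" if e: "e > 0" for e
  proof (rule LIMSEQ_le_const2)
    show "(\<lambda>n. inner (x n) (x n) - 2 * inner (x n) f) \<longlonglongrightarrow> inner u u - 2 * inner u f"
      by (intro tendsto_intros lim)
    show "\<exists>N. \<forall>n\<ge>N. inner (x n) (x n) - 2 * inner (x n) f \<le> e"
      using form_le_polar_eventually[OF fc lim e] polar_u[OF xD] inner_le_form[OF xD]
      by (smt (verit))
  qed
  then show ?thesis using field_le_epsilon[of "inner u u - 2 * inner u f" 0] by simp
qed

lemma friedrichs_solution_unique:
  assumes "(u1, v1) \<in> friedrichs_graph D T \<tau>" "\<tau> *\<^sub>R u1 - v1 = f"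
    and "(u2, v2) \<in> friedrichs_graph D T \<tau>" "\<tau> *\<^sub>R u2 - v2 = f"
  shows "u1 = u2"
proof -
  have "(u1 - u2, v1 - v2) \<in> friedrichs_graph D T \<tau>"
    using assms(1,3) form_completion_image_diff
    by (auto simp: friedrichs_graph_iff adjoint_graph_def inner_diff_right)
  moreover have "\<tau> *\<^sub>R (u1 - u2) - (v1 - v2) = 0"
    using assms(2,4) by (simp add: algebra_simps)
  ultimately have "inner (u1 - u2) (u1 - u2) \<le> 0"
    using friedrichs_solution_norm_le by fastforce
  then show ?thesis by (metis eq_iff_diff_eq_0 inner_gt_zero_iff not_le)
qed

lemma energy_lower_bound: "y \<in> D \<Longrightarrow> - (norm f)\<^sup>2 \<le> energy f y"
proof -
  assume "y \<in> D"
  then have "(norm y)\<^sup>2 \<le> form y" using inner_le_form by (simp add: power2_norm_eq_inner)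
  moreover have "inner y f \<le> norm y * norm f" by (rule norm_cauchy_schwarz)
  moreover have "0 \<le> (norm y - norm f)\<^sup>2" by simp
  ultimately show ?thesis unfolding energy_def power2_diff by linarith
qed

lemma form_cauchy_imp_Cauchy:
  assumes "form_cauchy form D x" shows "Cauchy x"
proof (rule CauchyI)
  fix e :: real assume "e > 0"
  then have "e\<^sup>2 > 0" by simp
  then obtain N where N: "\<forall>m\<ge>N. \<forall>n\<ge>N. form (x m - x n) < e\<^sup>2"
    using assms unfolding form_cauchy_def by blast
  have "norm (x m - x n) < e" if "m \<ge> N" "n \<ge> N" for m n
  proof -
    have "x m - x n \<in> D" using assms by (simp add: form_cauchy_def diff_in_D)
    then have "(norm (x m - x n))\<^sup>2 \<le> form (x m - x n)"
      by (simp add: power2_norm_eq_inner inner_le_form)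
    with N that have "(norm (x m - x n))\<^sup>2 < e\<^sup>2" by fastforce
    then show ?thesis using \<open>e > 0\<close> by (simp add: power2_less_imp_less)
  qed
  then show "\<exists>M. \<forall>m\<ge>M. \<forall>n\<ge>M. norm (x m - x n) < e" by blast
qed

text \<open>Parallelogram argument: the midpoint of two almost-minimizers of the strictly convex
  energy cannot do better than the infimum, so they are close in the energy norm.\<close>
lemma minimizing_sequence_form_cauchy:
  assumes xD: "\<And>n. x n \<in> D" and min: "\<And>y. y \<in> D \<Longrightarrow> m \<le> energy f y"
    and xE: "\<And>n. energy f (x n) < m + 1 / real (Suc n)"
  shows "form_cauchy form D x"
proof -
  have midpoint: "form (a - c) \<le> 2 * energy f a + 2 * energy f c - 4 * m"
    if "a \<in> D" "c \<in> D" for a c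
  proof -
    have "(1/2) *\<^sub>R a + (1/2) *\<^sub>R c \<in> D" using subspace that by (simp add: subspace_def)
    then have "m \<le> energy f ((1/2) *\<^sub>R a + (1/2) *\<^sub>R c)" by (rule min)
    also have "\<dots> = form a / 4 + polar a c / 2 + form c / 4 - inner a f - inner c f"
      using form_lin_comb[OF that, of "1/2" "1/2"]
      by (simp add: energy_def inner_add_left power2_eq_square)
    finally show ?thesis using form_diff[OF that] by (simp add: energy_def)
  qed
  have "\<exists>N. \<forall>k\<ge>N. \<forall>n\<ge>N. form (x k - x n) < e" if "e > 0" for e
  proof -
    obtain N where N: "1 / real (Suc N) < e / 4"
      using reals_Archimedean[of "e/4"] \<open>e > 0\<close> by (auto simp: inverse_eq_divide)
    have "form (x k - x n) < e" if "k \<ge> N" "n \<ge> N" for k n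
    proof -
      have "1 / real (Suc k) \<le> 1 / real (Suc N)" "1 / real (Suc n) \<le> 1 / real (Suc N)"
        using that by (auto simp: frac_le)
      then show ?thesis using midpoint[OF xD xD, of k n] xE[of k] xE[of n] N by linarith
    qed
    then show ?thesis by blast
  qed
  then show ?thesis using xD by (simp add: form_cauchy_def)
qed

text \<open>Euler--Lagrange equation of the energy at the limit of a minimizing sequence.\<close>
lemma minimizing_sequence_limit_adjoint:
  assumes xD: "\<And>n. x n \<in> D" and lim: "x \<longlonglongrightarrow> u"
    and min: "\<And>y. y \<in> D \<Longrightarrow> m \<le> energy f y" and E: "(\<lambda>n. energy f (x n)) \<longlonglongrightarrow> m"
  shows "(u, \<tau> *\<^sub>R u - f) \<in> adjoint_graph D T"
proof -
  have "inner (T y) u = inner y (\<tau> *\<^sub>R u - f)" if yD: "y \<in> D" for y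
  proof -
    define c where "c = \<tau> * inner u y - inner u (T y) - inner y f"
    have c: "(\<lambda>n. polar (x n) y - inner y f) \<longlonglongrightarrow> c"
      unfolding c_def polar_def symmetric[OF xD yD] by (intro tendsto_intros lim)
    have "m \<le> m + 2 * t * c + t\<^sup>2 * form y" for t
    proof (rule LIMSEQ_le_const)
      show "(\<lambda>n. energy f (x n) + 2 * t * (polar (x n) y - inner y f) + t\<^sup>2 * form y)
              \<longlonglongrightarrow> m + 2 * t * c + t\<^sup>2 * form y"
        by (intro tendsto_intros E c)
      have "m \<le> energy f (1 *\<^sub>R x n + t *\<^sub>R y)" for n
        using min subspace xD yD by (simp add: subspace_def)
      also have "energy f (1 *\<^sub>R x n + t *\<^sub>R y)
          = energy f (x n) + 2 * t * (polar (x n) y - inner y f) + t\<^sup>2 * form y" for n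
        unfolding energy_def form_lin_comb[OF xD yD] by (simp add: algebra_simps)
      finally show "\<exists>N. \<forall>n\<ge>N. m \<le> energy f (x n) + 2 * t * (polar (x n) y - inner y f) + t\<^sup>2 * form y"
        by blast
    qed
    then have "c = 0" by (intro linear_coeff_zero_if_quadratic_nonneg[of c "form y"]) simp
    then show ?thesis by (simp add: c_def inner_diff_right inner_commute)
  qed
  then show ?thesis by (simp add: adjoint_graph_def)
qed

lemma friedrichs_solution_exists: "\<exists>u. (u, \<tau> *\<^sub>R u - f) \<in> friedrichs_graph D T \<tau>"
proof -
  define m where "m = Inf (energy f ` D)"
  have bdd: "bdd_below (energy f ` D)"
    using energy_lower_bound by (auto intro!: bdd_belowI[where m = "- (norm f)\<^sup>2"])
  have min: "m \<le> energy f y" if "y \<in> D" for y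
    unfolding m_def using bdd that by (simp add: cInf_lower)
  have "\<exists>y\<in>D. energy f y < m + 1 / real (Suc n)" for n
  proof -
    have "Inf (energy f ` D) < m + 1 / real (Suc n)" unfolding m_def by simp
    then show ?thesis using subspace_0[OF subspace] bdd by (subst (asm) cInf_less_iff) auto
  qed
  then obtain x where xD: "\<And>n. x n \<in> D" and xE: "\<And>n. energy f (x n) < m + 1 / real (Suc n)"
    by metis
  have fc: "form_cauchy form D x" using xD min xE by (rule minimizing_sequence_form_cauchy)
  then obtain u where lim: "x \<longlonglongrightarrow> u"
    using form_cauchy_imp_Cauchy Cauchy_convergent_iff convergent_def by blast
  have "(\<lambda>n. energy f (x n)) \<longlonglongrightarrow> m"
  proof (rule tendsto_sandwich[where f = "\<lambda>_. m" and h = "\<lambda>n. m + 1 / real (Suc n)"])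
    show "(\<lambda>n. m + 1 / real (Suc n)) \<longlonglongrightarrow> m"
      using tendsto_add[OF tendsto_const[of m] LIMSEQ_Suc[OF lim_inverse_n']]
      by (simp add: inverse_eq_divide)
    show "\<forall>\<^sub>F n in sequentially. m \<le> energy f (x n)" using min xD by simp
    show "\<forall>\<^sub>F n in sequentially. energy f (x n) \<le> m + 1 / real (Suc n)"
      using xE by (simp add: less_imp_le)
  qed simp
  then have "(u, \<tau> *\<^sub>R u - f) \<in> adjoint_graph D T"
    using xD lim min by (intro minimizing_sequence_limit_adjoint)
  moreover have "u \<in> form_completion_image form D"
    using fc lim by (auto simp: form_completion_image_def)
  ultimately show ?thesis by (auto simp: friedrichs_graph_iff)
qed

lemma friedrichs_resolvent_in_graph:
  "(friedrichs_resolvent D T \<tau> f, \<tau> *\<^sub>R friedrichs_resolvent D T \<tau> f - f) \<in> friedrichs_graph D T \<tau>"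
proof -
  obtain u where u: "(u, \<tau> *\<^sub>R u - f) \<in> friedrichs_graph D T \<tau>"
    using friedrichs_solution_exists by blast
  have "friedrichs_resolvent D T \<tau> f = u"
    unfolding friedrichs_resolvent_def
  proof (rule the_equality)
    fix u' assume "\<exists>v. (u', v) \<in> friedrichs_graph D T \<tau> \<and> \<tau> *\<^sub>R u' - v = f"
    then obtain v where "(u', v) \<in> friedrichs_graph D T \<tau>" "\<tau> *\<^sub>R u' - v = f" by blast
    then show "u' = u" by (rule friedrichs_solution_unique[OF _ _ u]) simp
  qed (use u in auto)
  with u show ?thesis by simp
qed

lemma friedrichs_resolvent_inner_le: "inner (friedrichs_resolvent D T \<tau> f) f \<le> 2 * (norm f)\<^sup>2"
proof -
  define R where "R = friedrichs_resolvent D T \<tau> f"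
  have "inner R R \<le> 2 * inner R f"
    unfolding R_def by (rule friedrichs_solution_norm_le[OF friedrichs_resolvent_in_graph]) simp
  moreover have cs: "inner R f \<le> norm R * norm f" by (rule norm_cauchy_schwarz)
  ultimately have "norm R * norm R \<le> 2 * norm R * norm f"
    by (simp add: power2_eq_square[symmetric] power2_norm_eq_inner)
  then have "norm R \<le> 2 * norm f"
    by (cases "norm R = 0") (simp_all add: mult.commute mult.left_commute)
  then have "norm R * norm f \<le> 2 * norm f * norm f" by (simp add: mult_right_mono)
  with cs show ?thesis unfolding R_def by (simp add: power2_eq_square)
qed

end

lemma complex_linear_on_zero:
  assumes "complex_linear_on Ja Jb D T" "0 \<in> D"
  shows "T 0 = 0"
  using assms unfolding complex_linear_on_def by (metis scale_zero_left)

lemma complex_linear_on_diff: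
  assumes "complex_linear_on Ja Jb D T" "subspace D" "x \<in> D" "y \<in> D"
  shows "T (x - y) = T x - T y"
proof -
  have "(-1) *\<^sub>R y \<in> D" using assms(2,4) by (rule subspace_scale)
  then show ?thesis
    using assms(1,3,4) unfolding complex_linear_on_def by (metis scaleR_minus1_left diff_conv_add_uminus)
qed

text \<open>The operator \<open>(I\<^sup>*)\<^sup>-\<^sup>1 T I\<^sup>-\<^sup>1\<close> for the completion of \<open>D\<close> in the norm \<open>q\<^sup>1\<^sup>/\<^sup>2\<close>,
  encoded by representing Cauchy sequences exactly as in \<open>angular_ext\<close>.\<close>
definition form_ext :: "('a::real_inner \<Rightarrow> real) \<Rightarrow> 'a set \<Rightarrow> ('a \<Rightarrow> 'a) \<Rightarrow> ('a \<times> 'a) set" where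
  "form_ext q D T = {(u, h). \<exists>x. form_cauchy q D x \<and> x \<longlonglongrightarrow> u \<and>
     (\<forall>z w. form_cauchy q D z \<and> z \<longlonglongrightarrow> w \<longrightarrow> (\<lambda>n. inner (T (x n)) w) \<longlonglongrightarrow> inner h w)}"

definition angular_form ::
  "('a::real_inner \<Rightarrow> 'a) \<Rightarrow> ('a \<Rightarrow> 'b::real_inner) \<Rightarrow> 'b set \<Rightarrow> ('b \<Rightarrow> 'b) \<Rightarrow> real \<Rightarrow> real
    \<Rightarrow> 'a \<times> 'b \<Rightarrow> real" where
  "angular_form T11 T21 D2 T22 \<kappa> \<tau> p = ang_form1 T11 T21 D2 T22 \<kappa> \<tau> (fst p) + ang_form2 T22 \<tau> (snd p)"

lemma angular_ext_eq_form_ext: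
  "angular_ext T11 T12 T21 T22 D1 D2 \<kappa> \<tau> =
     form_ext (angular_form T11 T21 D2 T22 \<kappa> \<tau>) (D1 \<times> D2) (block_op T11 T12 T21 T22)"
  by (simp add: angular_ext_def form_ext_def angular_form_def[abs_def] Let_def)

text \<open>Testing against constant sequences already forces \<open>(u, h)\<close> into the adjoint.\<close>
lemma form_ext_subset_adjoint_graph:
  assumes q0: "q 0 = 0"
    and sym: "\<And>a b. a \<in> D \<Longrightarrow> b \<in> D \<Longrightarrow> inner (T a) b = inner a (T b)"
  shows "form_ext q D T \<subseteq> adjoint_graph D T"
proof safe
  fix u h assume "(u, h) \<in> form_ext q D T"
  then obtain x where fc: "form_cauchy q D x" and lim: "x \<longlonglongrightarrow> u"
    and test: "\<And>z w. form_cauchy q D z \<Longrightarrow> z \<longlonglongrightarrow> w \<Longrightarrow> (\<lambda>n. inner (T (x n)) w) \<longlonglongrightarrow> inner h w"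
    unfolding form_ext_def by blast
  have "inner (T p) u = inner p h" if p: "p \<in> D" for p
  proof -
    have "form_cauchy q D (\<lambda>n. p)" using p q0 by (simp add: form_cauchy_def)
    then have "(\<lambda>n. inner (T (x n)) p) \<longlonglongrightarrow> inner h p" using test by blast
    moreover have "(\<lambda>n. inner (T (x n)) p) \<longlonglongrightarrow> inner u (T p)"
      using sym[OF _ p] fc by (simp add: form_cauchy_def) (intro tendsto_intros lim)
    ultimately show ?thesis by (metis LIMSEQ_unique inner_commute)
  qed
  then show "(u, h) \<in> adjoint_graph D T" by (simp add: adjoint_graph_def)
qed

text \<open>The test condition is automatic here because \<open>T x\<^sub>n\<close> converges in norm.\<close>
lemma closure_graph_subset_form_ext:
  fixes T :: "'a::real_inner \<Rightarrow> 'a"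
  assumes diff: "\<And>a b. a \<in> D \<Longrightarrow> b \<in> D \<Longrightarrow> a - b \<in> D \<and> T (a - b) = T a - T b"
    and bound: "\<And>d. d \<in> D \<Longrightarrow> q d \<le> K * ((norm d)\<^sup>2 + (norm (T d))\<^sup>2)"
  shows "closure (op_graph D T) \<subseteq> form_ext q D T"
proof safe
  fix u h assume "(u, h) \<in> closure (op_graph D T)"
  then obtain S where S: "\<And>n. S n \<in> op_graph D T" and lim: "S \<longlonglongrightarrow> (u, h)"
    unfolding closure_sequential by blast
  define x where "x n = fst (S n)" for n
  have xD: "x n \<in> D" and Sx: "S n = (x n, T (x n))" for n
    using S[of n] unfolding x_def op_graph_def by auto
  have xlim: "x \<longlonglongrightarrow> u" and Tlim: "(\<lambda>n. T (x n)) \<longlonglongrightarrow> h"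
    using tendsto_fst[OF lim] tendsto_snd[OF lim] by (simp_all add: Sx)
  have "\<exists>N. \<forall>m\<ge>N. \<forall>n\<ge>N. q (x m - x n) < e" if e: "e > 0" for e
  proof -
    define K' where "K' = max K 0"
    define \<delta> where "\<delta> = sqrt (e / (2 * K' + 2))"
    have K'0: "K' \<ge> 0" and \<delta>: "\<delta> > 0" "\<delta>\<^sup>2 > 0" "\<delta>\<^sup>2 = e / (2 * K' + 2)"
      using e by (simp_all add: K'_def \<delta>_def)
    obtain N where N1: "\<forall>m\<ge>N. \<forall>n\<ge>N. norm (x m - x n) < \<delta>"
      and N2: "\<forall>m\<ge>N. \<forall>n\<ge>N. norm (T (x m) - T (x n)) < \<delta>"
      using CauchyD[OF LIMSEQ_imp_Cauchy[OF xlim] \<delta>(1)] CauchyD[OF LIMSEQ_imp_Cauchy[OF Tlim] \<delta>(1)]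
      by (metis max.boundedE)
    have "q (x m - x n) < e" if "m \<ge> N" "n \<ge> N" for m n
    proof -
      have "norm (x m - x n) < \<delta>" "norm (T (x m - x n)) < \<delta>"
        using N1 N2 that diff[OF xD xD] by auto
      then have \<delta>_bounds: "(norm (x m - x n))\<^sup>2 \<le> \<delta>\<^sup>2" "(norm (T (x m - x n)))\<^sup>2 \<le> \<delta>\<^sup>2"
        by (meson less_imp_le norm_ge_zero power_mono)+
      have "q (x m - x n) \<le> K * ((norm (x m - x n))\<^sup>2 + (norm (T (x m - x n)))\<^sup>2)"
        using bound diff[OF xD xD] by blast
      also have "\<dots> \<le> K' * ((norm (x m - x n))\<^sup>2 + (norm (T (x m - x n)))\<^sup>2)"
        unfolding K'_def by (intro mult_right_mono) auto
      also have "\<dots> \<le> K' * (2 * \<delta>\<^sup>2)"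
        using \<delta>_bounds K'0 by (intro mult_left_mono) auto
      also have "\<dots> < e"
      proof -
        have "e = 2 * \<delta>\<^sup>2 + K' * (2 * \<delta>\<^sup>2)" using \<delta>(3) K'0 by (simp add: field_simps)
        then show ?thesis using \<delta>(2) by linarith
      qed
      finally show ?thesis .
    qed
    then show ?thesis by blast
  qed
  then have "form_cauchy q D x" using xD by (simp add: form_cauchy_def)
  moreover have "(\<lambda>n. inner (T (x n)) w) \<longlonglongrightarrow> inner h w" for w
    using Tlim by (intro tendsto_intros)
  ultimately show "(u, h) \<in> form_ext q D T" using xlim by (auto simp: form_ext_def)
qed

lemma block_op_diff:
  assumes "complex_linear_on J1 J1 D1 T11" "complex_linear_on J2 J1 D2 T12"
    and "complex_linear_on J1 J2 D1 T21" "complex_linear_on J2 J2 D2 T22"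
    and "subspace D1" "subspace D2" "a \<in> D1 \<times> D2" "b \<in> D1 \<times> D2"
  shows "block_op T11 T12 T21 T22 (a - b) = block_op T11 T12 T21 T22 a - block_op T11 T12 T21 T22 b"
  using assms complex_linear_on_diff[OF assms(1,5)] complex_linear_on_diff[OF assms(2,6)]
    complex_linear_on_diff[OF assms(3,5)] complex_linear_on_diff[OF assms(4,6)]
  by (auto simp: block_op_def diff_add_eq_diff_diff_swap)

lemma block_op_cross_symmetric:
  assumes sym: "symmetric_op (D1 \<times> D2) (block_op T11 T12 T21 T22)"
    and "0 \<in> D1" "0 \<in> D2" "T11 0 = 0" "T12 0 = 0" "T21 0 = 0" "T22 0 = 0"
    and "d1 \<in> D1" "d2 \<in> D2"
  shows "inner (T12 d2) d1 = inner (T21 d1) d2"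
proof -
  have "inner (block_op T11 T12 T21 T22 (d1, 0)) (0, d2) = inner (d1, 0) (block_op T11 T12 T21 T22 (0, d2))"
    using sym assms(2-) unfolding symmetric_op_def by blast
  then show ?thesis using assms(4-7) by (simp add: block_op_def inner_commute)
qed

lemma block_diagonal_forms_le_graph_norm:
  fixes d1 :: "'a::real_inner" and d2 :: "'b::real_inner"
  assumes cross: "inner (T12 d2) d1 = inner (T21 d1) d2"
  shows "(inner (T11 d1) d1 - \<kappa> * inner d1 d1) + ang_form2 T22 \<tau> d2
           \<le> (1 + \<bar>\<kappa>\<bar> + \<bar>\<tau>\<bar>) * ((norm (d1, d2))\<^sup>2 + (norm (block_op T11 T12 T21 T22 (d1, d2)))\<^sup>2)"
proof -
  define S where "S = (norm (d1, d2))\<^sup>2 + (norm (block_op T11 T12 T21 T22 (d1, d2)))\<^sup>2"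
  have inner_le_S: "inner d1 d1 \<le> S" "inner d2 d2 \<le> S"
    by (simp_all add: S_def norm_Pair power2_norm_eq_inner)
  txt \<open>The off-diagonal entries cancel when \<open>T\<close> is tested against the reflection \<open>(d1, -d2)\<close>.\<close>
  have "inner (T11 d1) d1 - inner (T22 d2) d2 = inner (block_op T11 T12 T21 T22 (d1, d2)) (d1, - d2)"
    using cross by (simp add: block_op_def inner_add_right inner_commute)
  also have "\<dots> \<le> norm (block_op T11 T12 T21 T22 (d1, d2)) * norm (d1, d2)"
    using norm_cauchy_schwarz[of _ "(d1, - d2)"] by (simp add: norm_Pair)
  also have "\<dots> \<le> S"
    using sum_squares_bound[of "norm (block_op T11 T12 T21 T22 (d1, d2))" "norm (d1, d2)"]
      mult_nonneg_nonneg[OF norm_ge_zero norm_ge_zero, of "block_op T11 T12 T21 T22 (d1, d2)" "(d1, d2)"]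
    unfolding S_def by linarith
  finally have diagonal: "inner (T11 d1) d1 - inner (T22 d2) d2 \<le> S" .
  have scale: "c * i \<le> \<bar>c\<bar> * S" if "0 \<le> i" "i \<le> S" for c i :: real
    using that by (metis abs_ge_self abs_ge_zero mult_left_mono mult_right_mono order_trans)
  have "- \<kappa> * inner d1 d1 \<le> \<bar>\<kappa>\<bar> * S" "\<tau> * inner d2 d2 \<le> \<bar>\<tau>\<bar> * S"
    using scale[of "inner d1 d1" "- \<kappa>"] scale[of "inner d2 d2" \<tau>] inner_le_S by simp_all
  with diagonal show ?thesis unfolding S_def[symmetric] ang_form2_def by (simp add: algebra_simps)
qed

lemma shifted_form_bound:
  fixes \<gamma> \<kappa> \<kappa>' A i :: real
  assumes "B \<le> \<gamma> * (A + (\<kappa>' - \<kappa>) * i)" "0 \<le> A" "0 \<le> i"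
  shows "B \<le> \<bar>\<gamma>\<bar> * (1 + \<bar>\<kappa>' - \<kappa>\<bar>) * (A + i)"
proof -
  have "\<gamma> * (A + (\<kappa>' - \<kappa>) * i) \<le> \<bar>\<gamma>\<bar> * \<bar>A + (\<kappa>' - \<kappa>) * i\<bar>"
    by (metis abs_ge_self abs_mult)
  also have "\<dots> \<le> \<bar>\<gamma>\<bar> * (A + \<bar>\<kappa>' - \<kappa>\<bar> * i)"
    using assms(2,3) abs_triangle_ineq[of A "(\<kappa>' - \<kappa>) * i"] by (intro mult_left_mono) (simp_all add: abs_mult)
  also have "\<dots> \<le> \<bar>\<gamma>\<bar> * ((1 + \<bar>\<kappa>' - \<kappa>\<bar>) * (A + i))"
    using assms(2,3) by (intro mult_left_mono) (simp_all add: algebra_simps)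
  finally show ?thesis using assms(1) by (simp add: mult.assoc)
qed

lemma off_diagonal_le_graph_norm_of_bounded:
  fixes d1 :: "'a::real_normed_vector" and d2 :: "'b::real_normed_vector"
  assumes "norm (T22 d2) \<le> C * norm d2"
  shows "(norm (T21 d1))\<^sup>2 \<le> (2 + 2 * C\<^sup>2) * ((norm (d1, d2))\<^sup>2 + (norm (block_op T11 T12 T21 T22 (d1, d2)))\<^sup>2)"
proof -
  define a where "a = norm (block_op T11 T12 T21 T22 (d1, d2))"
  define b where "b = norm (d1, d2)"
  have "T21 d1 = snd (block_op T11 T12 T21 T22 (d1, d2)) - T22 d2" by (simp add: block_op_def)
  then have "norm (T21 d1) \<le> norm (snd (block_op T11 T12 T21 T22 (d1, d2))) + norm (T22 d2)"
    by (metis norm_triangle_ineq4)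
  also have "\<dots> \<le> a + \<bar>C\<bar> * b"
  proof (rule add_mono)
    show "norm (snd (block_op T11 T12 T21 T22 (d1, d2))) \<le> a"
      unfolding a_def by (metis norm_snd_le prod.collapse)
    have "C * norm d2 \<le> \<bar>C\<bar> * b"
      unfolding b_def by (meson abs_ge_self abs_ge_zero mult_left_mono mult_right_mono norm_ge_zero norm_snd_le order_trans)
    with assms show "norm (T22 d2) \<le> \<bar>C\<bar> * b" by linarith
  qed
  finally have "(norm (T21 d1))\<^sup>2 \<le> (a + \<bar>C\<bar> * b)\<^sup>2" by (simp add: power_mono)
  also have "\<dots> \<le> 2 * a\<^sup>2 + 2 * C\<^sup>2 * b\<^sup>2"
    using sum_squares_bound[of a "\<bar>C\<bar> * b"] by (simp add: power2_sum power_mult_distrib)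
  also have "\<dots> \<le> (2 + 2 * C\<^sup>2) * (b\<^sup>2 + a\<^sup>2)" by (simp add: algebra_simps)
  finally show ?thesis by (simp add: a_def b_def)
qed

lemma off_diagonal_le_graph_norm:
  assumes cases: "(\<exists>\<gamma> \<kappa>. \<forall>y\<in>D1. (norm (T21 y))\<^sup>2 \<le> \<gamma> * (inner (T11 y) y - \<kappa> * inner y y))
      \<or> bounded_op D2 T22"
    and kappa: "\<And>y. y \<in> D1 \<Longrightarrow> 0 \<le> inner (T11 y) y - \<kappa>' * inner y y"
  shows "\<exists>c\<ge>0. \<forall>d1\<in>D1. \<forall>d2\<in>D2. (norm (T21 d1))\<^sup>2 \<le> c * ((inner (T11 d1) d1 - \<kappa>' * inner d1 d1)
           + ((norm (d1, d2))\<^sup>2 + (norm (block_op T11 T12 T21 T22 (d1, d2)))\<^sup>2))"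
  using cases
proof
  assume "\<exists>\<gamma> \<kappa>. \<forall>y\<in>D1. (norm (T21 y))\<^sup>2 \<le> \<gamma> * (inner (T11 y) y - \<kappa> * inner y y)"
  then obtain \<gamma> \<kappa> where G: "\<forall>y\<in>D1. (norm (T21 y))\<^sup>2 \<le> \<gamma> * (inner (T11 y) y - \<kappa> * inner y y)"
    by blast
  have "(norm (T21 d1))\<^sup>2 \<le> \<bar>\<gamma>\<bar> * (1 + \<bar>\<kappa>' - \<kappa>\<bar>) * ((inner (T11 d1) d1 - \<kappa>' * inner d1 d1)
           + ((norm (d1, d2))\<^sup>2 + (norm (block_op T11 T12 T21 T22 (d1, d2)))\<^sup>2))"
    if "d1 \<in> D1" for d1 d2
  proof -
    have "(norm (T21 d1))\<^sup>2 \<le> \<bar>\<gamma>\<bar> * (1 + \<bar>\<kappa>' - \<kappa>\<bar>) * ((inner (T11 d1) d1 - \<kappa>' * inner d1 d1) + inner d1 d1)"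
      using G that kappa[OF that] by (intro shifted_form_bound) (auto simp: algebra_simps)
    also have "\<dots> \<le> \<bar>\<gamma>\<bar> * (1 + \<bar>\<kappa>' - \<kappa>\<bar>) * ((inner (T11 d1) d1 - \<kappa>' * inner d1 d1)
           + ((norm (d1, d2))\<^sup>2 + (norm (block_op T11 T12 T21 T22 (d1, d2)))\<^sup>2))"
      by (intro mult_left_mono add_left_mono) (simp_all add: norm_Pair power2_norm_eq_inner)
    finally show ?thesis .
  qed
  then show ?thesis by (intro exI[of _ "\<bar>\<gamma>\<bar> * (1 + \<bar>\<kappa>' - \<kappa>\<bar>)"]) auto
next
  assume "bounded_op D2 T22"
  then obtain C where C: "\<forall>y\<in>D2. norm (T22 y) \<le> C * norm y" unfolding bounded_op_def by blast
  have "(norm (T21 d1))\<^sup>2 \<le> (2 + 2 * C\<^sup>2) * ((inner (T11 d1) d1 - \<kappa>' * inner d1 d1)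
           + ((norm (d1, d2))\<^sup>2 + (norm (block_op T11 T12 T21 T22 (d1, d2)))\<^sup>2))"
    if "d1 \<in> D1" "d2 \<in> D2" for d1 d2
  proof -
    have "(norm (T21 d1))\<^sup>2 \<le> (2 + 2 * C\<^sup>2) * ((norm (d1, d2))\<^sup>2 + (norm (block_op T11 T12 T21 T22 (d1, d2)))\<^sup>2)"
      using C that(2) by (intro off_diagonal_le_graph_norm_of_bounded) blast
    also have "\<dots> \<le> (2 + 2 * C\<^sup>2) * ((inner (T11 d1) d1 - \<kappa>' * inner d1 d1)
           + ((norm (d1, d2))\<^sup>2 + (norm (block_op T11 T12 T21 T22 (d1, d2)))\<^sup>2))"
      using kappa[OF that(1)] by (intro mult_left_mono) auto
    finally show ?thesis .
  qed
  then show ?thesis by (intro exI[of _ "2 + 2 * C\<^sup>2"]) auto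
qed

lemma angular_form_le_graph_norm:
  fixes T11 :: "'a::real_inner \<Rightarrow> 'a" and T22 :: "'b::{real_inner,complete_space} \<Rightarrow> 'b"
  assumes F: "upper_semibounded_op D2 T22 \<tau>"
    and cross: "\<And>d1 d2. d1 \<in> D1 \<Longrightarrow> d2 \<in> D2 \<Longrightarrow> inner (T12 d2) d1 = inner (T21 d1) d2"
    and kappa: "\<And>y. y \<in> D1 \<Longrightarrow> 0 \<le> inner (T11 y) y - \<kappa> * inner y y"
    and off_diagonal: "\<exists>c\<ge>0. \<forall>d1\<in>D1. \<forall>d2\<in>D2. (norm (T21 d1))\<^sup>2 \<le> c * ((inner (T11 d1) d1 - \<kappa> * inner d1 d1)
           + ((norm (d1, d2))\<^sup>2 + (norm (block_op T11 T12 T21 T22 (d1, d2)))\<^sup>2))"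
  shows "\<exists>K. \<forall>d\<in>D1 \<times> D2.
    angular_form T11 T21 D2 T22 \<kappa> \<tau> d \<le> K * ((norm d)\<^sup>2 + (norm (block_op T11 T12 T21 T22 d))\<^sup>2)"
proof -
  obtain c where c: "c \<ge> 0" and c_bound: "\<forall>d1\<in>D1. \<forall>d2\<in>D2. (norm (T21 d1))\<^sup>2 \<le> c * ((inner (T11 d1) d1 - \<kappa> * inner d1 d1)
           + ((norm (d1, d2))\<^sup>2 + (norm (block_op T11 T12 T21 T22 (d1, d2)))\<^sup>2))"
    using off_diagonal by blast
  define c0 where "c0 = 1 + \<bar>\<kappa>\<bar> + \<bar>\<tau>\<bar>"
  have "angular_form T11 T21 D2 T22 \<kappa> \<tau> (d1, d2)
          \<le> (c0 + 2 * c * (c0 + 1)) * ((norm (d1, d2))\<^sup>2 + (norm (block_op T11 T12 T21 T22 (d1, d2)))\<^sup>2)"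
    if d1: "d1 \<in> D1" and d2: "d2 \<in> D2" for d1 d2
  proof -
    define A where "A = inner (T11 d1) d1 - \<kappa> * inner d1 d1"
    define B where "B = ang_form2 T22 \<tau> d2"
    define R where "R = inner (friedrichs_resolvent D2 T22 \<tau> (T21 d1)) (T21 d1)"
    define S where "S = (norm (d1, d2))\<^sup>2 + (norm (block_op T11 T12 T21 T22 (d1, d2)))\<^sup>2"
    have A: "0 \<le> A" using kappa[OF d1] by (simp add: A_def)
    have B: "0 \<le> B" using upper_semibounded_op.form_nonneg[OF F d2] by (simp add: B_def)
    have AB: "A + B \<le> c0 * S"
      using cross[OF d1 d2] unfolding A_def B_def S_def c0_def by (rule block_diagonal_forms_le_graph_norm)
    have "R \<le> 2 * (norm (T21 d1))\<^sup>2"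
      unfolding R_def by (rule upper_semibounded_op.friedrichs_resolvent_inner_le[OF F])
    also have "\<dots> \<le> 2 * (c * (A + S))" using c_bound d1 d2 by (simp add: A_def S_def)
    also have "\<dots> \<le> 2 * (c * ((c0 + 1) * S))"
      using AB A B c by (intro mult_left_mono) (auto simp: algebra_simps)
    finally have "R \<le> 2 * c * (c0 + 1) * S" by simp
    moreover have "angular_form T11 T21 D2 T22 \<kappa> \<tau> (d1, d2) = A + R + B"
      by (simp add: angular_form_def ang_form1_def A_def B_def R_def)
    ultimately show ?thesis using AB unfolding S_def[symmetric] by (simp add: algebra_simps)
  qed
  then show ?thesis by blast
qed

theorem mainTheorem7:
  fixes T11 :: "'a::{real_inner,complete_space} \<Rightarrow> 'a"
    and T12 :: "'b::{real_inner,complete_space} \<Rightarrow> 'a"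
    and T21 :: "'a \<Rightarrow> 'b"
    and T22 :: "'b \<Rightarrow> 'b"
    and dom11 :: "'a set" and dom22 :: "'b set"
    and J1 :: "'a \<Rightarrow> 'a" and J2 :: "'b \<Rightarrow> 'b"
    and \<kappa>' \<tau>' :: real
  assumes J1: "complex_structure J1" and J2: "complex_structure J2"
    and dom11: "complex_subspace J1 dom11" and dom22: "complex_subspace J2 dom22"
    and lin11: "complex_linear_on J1 J1 dom11 T11"
    and lin12: "complex_linear_on J2 J1 dom22 T12"
    and lin21: "complex_linear_on J1 J2 dom11 T21"
    and lin22: "complex_linear_on J2 J2 dom22 T22"
    and sym: "symmetric_op (dom11 \<times> dom22) (block_op T11 T12 T21 T22)"
    and sym11: "symmetric_op dom11 T11"
    and sym22: "symmetric_op dom22 T22"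
    and ess: "ess_selfadjoint (dom11 \<times> dom22) (block_op T11 T12 T21 T22)"
    and below: "bounded_below_op dom11 T11"
    and above: "bounded_above_op dom22 T22"
    and cases:
      "(ess_selfadjoint dom22 T22 \<and>
          (\<exists>\<gamma> \<kappa>. \<forall>y\<in>dom11. (norm (T21 y))\<^sup>2 \<le> \<gamma> * (inner (T11 y) y - \<kappa> * inner y y)))
       \<or> (\<exists>\<gamma> \<kappa> \<tau>. (\<forall>y\<in>dom11. (norm (T21 y))\<^sup>2 \<le> \<gamma> * (inner (T11 y) y - \<kappa> * inner y y)) \<and>
                    (\<forall>y\<in>dom22. (norm (T12 y))\<^sup>2 \<le> \<gamma> * (\<tau> * inner y y - inner (T22 y) y)))
       \<or> (bounded_op dom11 T11 \<and> bounded_op dom22 T22)"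
    and kappa': "\<forall>y\<in>dom11. inner y y \<le> inner (T11 y) y - \<kappa>' * inner y y"
    and tau': "\<forall>y\<in>dom22. inner y y \<le> \<tau>' * inner y y - inner (T22 y) y"
  shows "closure (op_graph (dom11 \<times> dom22) (block_op T11 T12 T21 T22))
           = angular_ext T11 T12 T21 T22 dom11 dom22 \<kappa>' \<tau>'"
proof -
  let ?T = "block_op T11 T12 T21 T22" and ?q = "angular_form T11 T21 dom22 T22 \<kappa>' \<tau>'"
  have s1: "subspace dom11" and s2: "subspace dom22"
    using dom11 dom22 by (simp_all add: complex_subspace_def)
  have F: "upper_semibounded_op dom22 T22 \<tau>'"
    using s2 lin22 sym22 tau' unfolding upper_semibounded_op_def complex_linear_on_def symmetric_op_def
    by (simp add: ang_form2_def)
  have zeros: "T11 0 = 0" "T12 0 = 0" "T21 0 = 0" "T22 0 = 0"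
    using complex_linear_on_zero subspace_0 s1 s2 lin11 lin12 lin21 lin22 by metis+
  have cross: "inner (T12 d2) d1 = inner (T21 d1) d2" if "d1 \<in> dom11" "d2 \<in> dom22" for d1 d2
    using block_op_cross_symmetric[OF sym] subspace_0[OF s1] subspace_0[OF s2] zeros that by blast
  have kappa: "0 \<le> inner (T11 y) y - \<kappa>' * inner y y" if "y \<in> dom11" for y
    using kappa' that by (meson inner_ge_zero order_trans)
  have "\<exists>K. \<forall>d\<in>dom11 \<times> dom22. ?q d \<le> K * ((norm d)\<^sup>2 + (norm (?T d))\<^sup>2)"
    using cases kappa by (intro angular_form_le_graph_norm[OF F cross kappa] off_diagonal_le_graph_norm) blast+
  then obtain K where K: "\<And>d. d \<in> dom11 \<times> dom22 \<Longrightarrow> ?q d \<le> K * ((norm d)\<^sup>2 + (norm (?T d))\<^sup>2)"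
    by blast
  have "closure (op_graph (dom11 \<times> dom22) ?T) \<subseteq> form_ext ?q (dom11 \<times> dom22) ?T"
    using block_op_diff[OF lin11 lin12 lin21 lin22 s1 s2] s1 s2
    by (intro closure_graph_subset_form_ext[OF _ K]) (auto simp: subspace_diff)
  moreover have "form_ext ?q (dom11 \<times> dom22) ?T \<subseteq> adjoint_graph (dom11 \<times> dom22) ?T"
  proof (rule form_ext_subset_adjoint_graph)
    show "?q 0 = 0" by (simp add: angular_form_def ang_form1_def ang_form2_def zeros)
  qed (use sym in \<open>auto simp: symmetric_op_def\<close>)
  ultimately show ?thesis using ess by (simp add: angular_ext_eq_form_ext ess_selfadjoint_def)
qed

end
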